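(* Let $G=(V,E)$ with $|V|\ge 3$, $N\ge3$, $\varepsilon=0$ and $s_0\in S_{nc}$. Then for every $\gamma\in(0,1)$, the game $\Gamma_N(G|s_0,\gamma,0)$ has a nonpositional trigger strategies profile $\bar\sigma$.
   Context: Setting. $G=(V,E)$ is a finite, simple, connected, undirected graph; $N\ge 3$ is an integer; $\gamma\in(0,1)$ and $\varepsilon\in[0,\frac1{N-1}]$ are parameters. There are $N$ tokens: cops $C_1,\dots,C_{N-1}$ (tokens $1,\dots,N-1$) and the robber $R$ (token $N$). A state is $s=(x^1,\dots,x^N,n)$ where $x^i\in V$ is the position of token $i$ and $n\in\{1,\dots,N\}$ is the token that moves next; $S^n$ denotes the set of states with token $n$ to move. A state is a capture state if $x^i=x^N$ for some $i\le N-1$; $S_{nc}$ is the set of noncapture states. In each turn exactly one token, the one to move, moves to a vertex of its closed neighbourhood (it may stay put); the order of moves is $C_1,C_2,\dots,C_{N-1},R,C_1,\dots$. Starting from an initial state $s_0\in S_{nc}$ at time $0$, the capture time is the first time $t$ at which a capture state occurs (infinite if never); after capture the game is over. Auxiliary games. For $m\in\{1,\dots,N\}$, $\Gamma_N^m(G|s_0,\gamma,\varepsilon)$ is the two-player zero-sum game in which player $P_m$ controls token $m$ and player $P_{-m}$ controls all other tokens, with the following payoff to $P_m$ ($P_{-m}$ receives its negative): $0$ if no capture ever occurs; if capture occurs at time $t$: for $m=N$, $-\gamma^t$; for $m\le N-1$, $\frac{1-\varepsilon}{K}\gamma^t$ if exactly $K\in\{1,\dots,N-2\}$ cops, including $C_m$,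 are on the robber's vertex, $\frac{\varepsilon}{N-K-1}\gamma^t$ if exactly $K\in\{1,\dots,N-2\}$ cops, not including $C_m$, are on the robber's vertex, and $\frac{\gamma^t}{N-1}$ if all $N-1$ cops are on the robber's vertex. $\Gamma^N_N$ is the modified cops-and-robber (CR) game. A pure positional strategy for token $n$ maps each state in $S^n\cap S_{nc}$ to an allowed next vertex. Each $\Gamma^m_N$ has optimal pure positional strategies (optimal from every initial state). For $m,n\in\{1,\dots,N\}$, $\phi^n_m$ denotes the strategy of token $n$ in a chosen pair of optimal pure positional strategies of $\Gamma^m_N$ (so $\phi^m_m$ is $P_m$'s optimal strategy and $(\phi^n_m)_{n\ne m}$ is $P_{-m}$'s). $\widehat\Sigma^n$ is the set of pure positional strategies of token $n$ that are components of optimal strategy pairs of $\Gamma^N_N$ (CR-optimal strategies). Trigger strategies. Given a choice of $(\phi^n_m)_{n,m}$, the trigger strategies profile $\bar\sigma=(\bar\sigma^1,\dots,\bar\sigma^N)$ of the $N$-player SCAR game $\Gamma_N(G|s_0,\gamma,\varepsilon)$ (same board and moves; player $n$ controls token $n$) is: token $n$, at current state $s$, plays $\phi^n_n(s)$ as long as every other player $m$ has followed $\phi^m_m$, and plays $\phi^n_m(s)$ from the moment a player $m\neq n$ deviates from $\phi^m_m$. Different choices of the optimal strategies give different trigger strategies profiles. $\bar\sigma$ is called positional if for all $n,m\in\{1,\dots,N\}$ there is $\widehat\sigma^n\in\widehat\Sigma^n$ with $\phi^n_m(s)=\widehat\sigma^n(s)$ for every state $s\in S^n\cap S_{nc}$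 reachable from $s_0$ by a finite sequence of legal moves passing only through noncapture states; otherwise $\bar\sigma$ is nonpositional. *)

theory Defs
  imports Main "HOL-Library.Extended_Real" Complex_Main
begin

definition simple_connected_graph :: "'v set \<Rightarrow> ('v \<Rightarrow> 'v \<Rightarrow> bool) \<Rightarrow> bool" where
  "simple_connected_graph V E \<longleftrightarrow> finite V \<and> V \<noteq> {} \<and>
     (\<forall>u v. E u v \<longrightarrow> u \<in> V \<and> v \<in> V) \<and>
     (\<forall>u v. E u v \<longrightarrow> E v u) \<and> (\<forall>u. \<not> E u u) \<and>
     (\<forall>u\<in>V. \<forall>v\<in>V. E\<^sup>*\<^sup>* u v)"

definition cnbhd :: "('v \<Rightarrow> 'v \<Rightarrow> bool) \<Rightarrow> 'v \<Rightarrow> 'v set" where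
  "cnbhd E v = {u. u = v \<or> E v u}"

text \<open>A state is (x, n): x i is the position of token i (tokens 1..N; cops 1..N-1,
  robber N), n is the token to move. Positions outside 1..N are fixed to undefined.\<close>
type_synonym 'v state = "(nat \<Rightarrow> 'v) \<times> nat"

definition States :: "'v set \<Rightarrow> nat \<Rightarrow> 'v state set" where
  "States V N = {(x, n). (\<forall>i\<in>{1..N}. x i \<in> V) \<and> (\<forall>i. i \<notin> {1..N} \<longrightarrow> x i = undefined)
                   \<and> n \<in> {1..N}}"

definition capture :: "nat \<Rightarrow> 'v state \<Rightarrow> bool" where
  "capture N s \<longleftrightarrow> (\<exists>i\<in>{1..N-1}. fst s i = fst s N)"

definition next_tok :: "nat \<Rightarrow> nat \<Rightarrow> nat" where
  "next_tok N n = (if n = N then 1 else n + 1)"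

definition move :: "nat \<Rightarrow> 'v state \<Rightarrow> 'v \<Rightarrow> 'v state" where
  "move N s v = ((fst s)(snd s := v), next_tok N (snd s))"

text \<open>General (history-dependent) pure strategies: histories are nonempty lists of states,
  ending with the current state. A profile assigns a strategy to each token.\<close>
type_synonym 'v hstrat = "'v state list \<Rightarrow> 'v"

primrec hist :: "nat \<Rightarrow> (nat \<Rightarrow> 'v hstrat) \<Rightarrow> 'v state \<Rightarrow> nat \<Rightarrow> 'v state list" where
  "hist N \<sigma> s0 0 = [s0]"
| "hist N \<sigma> s0 (Suc t) =
     hist N \<sigma> s0 t @ [move N (last (hist N \<sigma> s0 t)) (\<sigma> (snd (last (hist N \<sigma> s0 t))) (hist N \<sigma> s0 t))]"

definition play :: "nat \<Rightarrow> (nat \<Rightarrow> 'v hstrat) \<Rightarrow> 'v state \<Rightarrow> nat \<Rightarrow> 'v state" where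
  "play N \<sigma> s0 t = last (hist N \<sigma> s0 t)"

definition legal_hs :: "'v set \<Rightarrow> ('v \<Rightarrow> 'v \<Rightarrow> bool) \<Rightarrow> nat \<Rightarrow> nat \<Rightarrow> 'v hstrat \<Rightarrow> bool" where
  "legal_hs V E N n \<sigma> \<longleftrightarrow> (\<forall>h. h \<noteq> [] \<and> last h \<in> States V N \<and> snd (last h) = n
        \<longrightarrow> \<sigma> h \<in> cnbhd E (fst (last h) n))"

definition reward :: "nat \<Rightarrow> nat \<Rightarrow> real \<Rightarrow> 'v state \<Rightarrow> real" where
  "reward N m \<epsilon> s =
     (if m = N then -1
      else (let K = card {i\<in>{1..N-1}. fst s i = fst s N} in
            if K = N - 1 then 1 / real (N - 1)
            else if fst s m = fst s N then (1 - \<epsilon>) / real K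
            else \<epsilon> / real (N - K - 1)))"

definition payoff :: "nat \<Rightarrow> nat \<Rightarrow> real \<Rightarrow> real \<Rightarrow> 'v state \<Rightarrow> (nat \<Rightarrow> 'v hstrat) \<Rightarrow> real" where
  "payoff N m \<gamma> \<epsilon> s0 \<sigma> =
     (if \<exists>t. capture N (play N \<sigma> s0 t)
      then (let t = (LEAST t. capture N (play N \<sigma> s0 t)) in reward N m \<epsilon> (play N \<sigma> s0 t) * \<gamma> ^ t)
      else 0)"

definition legal_pos :: "'v set \<Rightarrow> ('v \<Rightarrow> 'v \<Rightarrow> bool) \<Rightarrow> nat \<Rightarrow> nat \<Rightarrow> ('v state \<Rightarrow> 'v) \<Rightarrow> bool" where
  "legal_pos V E N n \<phi> \<longleftrightarrow> (\<forall>s\<in>States V N. snd s = n \<and> \<not> capture N s \<longrightarrow> \<phi> s \<in> cnbhd E (fst s n))"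

definition pos_profile :: "(nat \<Rightarrow> 'v state \<Rightarrow> 'v) \<Rightarrow> nat \<Rightarrow> 'v hstrat" where
  "pos_profile \<phi> = (\<lambda>n h. \<phi> n (last h))"

text \<open>phi (a positional strategy for every token) is a pair of optimal pure positional
  strategies of Gamma^m_N (P_m: token m; P_{-m}: all other tokens), optimal from every
  initial noncapture state, i.e. a saddle point against all (history-dependent) deviations.\<close>
definition optimal_pair :: "'v set \<Rightarrow> ('v \<Rightarrow> 'v \<Rightarrow> bool) \<Rightarrow> nat \<Rightarrow> real \<Rightarrow> real \<Rightarrow> nat
                             \<Rightarrow> (nat \<Rightarrow> 'v state \<Rightarrow> 'v) \<Rightarrow> bool" where
  "optimal_pair V E N \<gamma> \<epsilon> m \<phi> \<longleftrightarrow>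
     (\<forall>n\<in>{1..N}. legal_pos V E N n (\<phi> n)) \<and>
     (\<forall>s0\<in>States V N. \<not> capture N s0 \<longrightarrow>
        (\<forall>\<sigma>. legal_hs V E N m \<sigma> \<longrightarrow>
             payoff N m \<gamma> \<epsilon> s0 ((pos_profile \<phi>)(m := \<sigma>)) \<le> payoff N m \<gamma> \<epsilon> s0 (pos_profile \<phi>)) \<and>
        (\<forall>\<tau>. (\<forall>n\<in>{1..N}. legal_hs V E N n (\<tau> n)) \<longrightarrow>
             payoff N m \<gamma> \<epsilon> s0 (pos_profile \<phi>) \<le> payoff N m \<gamma> \<epsilon> s0 (\<tau>(m := pos_profile \<phi> m))))"

text \<open>CR-optimal strategies of token n: components of optimal pairs of Gamma^N_N.\<close>
definition CR_opt :: "'v set \<Rightarrow> ('v \<Rightarrow> 'v \<Rightarrow> bool) \<Rightarrow> nat \<Rightarrow> real \<Rightarrow> real \<Rightarrow> nat \<Rightarrow> ('v state \<Rightarrow> 'v) set" where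
  "CR_opt V E N \<gamma> \<epsilon> n = {\<psi>. \<exists>\<phi>. optimal_pair V E N \<gamma> \<epsilon> N \<phi> \<and> \<psi> = \<phi> n}"

inductive_set reach :: "('v \<Rightarrow> 'v \<Rightarrow> bool) \<Rightarrow> nat \<Rightarrow> 'v state \<Rightarrow> 'v state set"
  for E N s0 where
  start: "s0 \<in> reach E N s0"
| step: "s \<in> reach E N s0 \<Longrightarrow> \<not> capture N s \<Longrightarrow> v \<in> cnbhd E (fst s (snd s))
           \<Longrightarrow> move N s v \<in> reach E N s0"

text \<open>A choice of optimal strategies: Phi m n = phi^n_m, for each m an optimal pair of Gamma^m_N.\<close>
definition trigger_choice :: "'v set \<Rightarrow> ('v \<Rightarrow> 'v \<Rightarrow> bool) \<Rightarrow> nat \<Rightarrow> real \<Rightarrow> real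
                               \<Rightarrow> (nat \<Rightarrow> nat \<Rightarrow> 'v state \<Rightarrow> 'v) \<Rightarrow> bool" where
  "trigger_choice V E N \<gamma> \<epsilon> \<Phi> \<longleftrightarrow> (\<forall>m\<in>{1..N}. optimal_pair V E N \<gamma> \<epsilon> m (\<Phi> m))"

text \<open>The trigger strategies profile induced by Phi (for reference): token n plays
  phi^n_n while nobody deviated, and phi^n_m after the first deviation by player m \<noteq> n.\<close>
definition first_deviator :: "nat \<Rightarrow> (nat \<Rightarrow> nat \<Rightarrow> 'v state \<Rightarrow> 'v) \<Rightarrow> 'v state list \<Rightarrow> nat option" where
  "first_deviator N \<Phi> h =
     (if \<exists>k. Suc k < length h \<and> h ! Suc k \<noteq> move N (h ! k) (\<Phi> (snd (h ! k)) (snd (h ! k)) (h ! k))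
      then Some (snd (h ! (LEAST k. Suc k < length h \<and>
                   h ! Suc k \<noteq> move N (h ! k) (\<Phi> (snd (h ! k)) (snd (h ! k)) (h ! k)))))
      else None)"

definition trigger_profile :: "nat \<Rightarrow> (nat \<Rightarrow> nat \<Rightarrow> 'v state \<Rightarrow> 'v) \<Rightarrow> nat \<Rightarrow> 'v hstrat" where
  "trigger_profile N \<Phi> n h =
     (case first_deviator N \<Phi> h of
        None \<Rightarrow> \<Phi> n n (last h)
      | Some m \<Rightarrow> (if m = n then \<Phi> n n (last h) else \<Phi> m n (last h)))"

definition positional_trigger :: "'v set \<Rightarrow> ('v \<Rightarrow> 'v \<Rightarrow> bool) \<Rightarrow> nat \<Rightarrow> real \<Rightarrow> real \<Rightarrow> 'v state
                                   \<Rightarrow> (nat \<Rightarrow> nat \<Rightarrow> 'v state \<Rightarrow> 'v) \<Rightarrow> bool" where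
  "positional_trigger V E N \<gamma> \<epsilon> s0 \<Phi> \<longleftrightarrow>
     (\<forall>n\<in>{1..N}. \<forall>m\<in>{1..N}. \<exists>\<psi>\<in>CR_opt V E N \<gamma> \<epsilon> n.
        \<forall>s\<in>reach E N s0. snd s = n \<and> \<not> capture N s \<longrightarrow> \<Phi> m n s = \<psi> s)"

end

theory Submission
  imports Defs
begin

text \<open>For \<open>\<epsilon> = 0\<close> cop \<open>C\<^sub>m\<close> gains nothing when another cop makes the capture. Value iteration
  yields optimal positional strategies of every auxiliary game \<open>\<Gamma>\<^sup>m\<^sub>N\<close>, and in \<open>\<Gamma>\<^sup>m\<^sub>N\<close> the
  coalition \<open>P\<^sub>-\<^sub>m\<close>, which moves the robber, loses nothing by walking the robber onto a cop other
  than \<open>C\<^sub>m\<close>: that gives \<open>C\<^sub>m\<close> payoff 0, its least possible one. Breaking ties in favour of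
  immediate capture, \<open>\<phi>\<^sup>N\<^sub>m\<close> does exactly this, whereas a CR-optimal robber never steps onto a cop,
  since postponing the capture by one turn is strictly better for it. It remains to reach a state
  where the robber, to move, is adjacent to some cop while another cop stands elsewhere; this is
  possible because \<open>G\<close> is connected and has at least three vertices.\<close>

lemma Max_image_diff_le:
  fixes f g :: "'a \<Rightarrow> real"
  assumes "finite A" "A \<noteq> {}" "\<forall>u\<in>A. \<bar>f u - g u\<bar> \<le> c"
  shows "\<bar>Max (f ` A) - Max (g ` A)\<bar> \<le> c"
proof -
  have "Max (f ` A) \<in> f ` A" "Max (g ` A) \<in> g ` A" using assms by (auto intro: Max_in)
  then obtain a b where a: "a \<in> A" "Max (f ` A) = f a" and b: "b \<in> A" "Max (g ` A) = g b" by auto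
  have "g a \<le> Max (g ` A)" "f b \<le> Max (f ` A)" using a(1) b(1) assms(1) by auto
  then show ?thesis using a b assms(3) by (smt (verit))
qed

lemma Min_image_diff_le:
  fixes f g :: "'a \<Rightarrow> real"
  assumes "finite A" "A \<noteq> {}" "\<forall>u\<in>A. \<bar>f u - g u\<bar> \<le> c"
  shows "\<bar>Min (f ` A) - Min (g ` A)\<bar> \<le> c"
proof -
  have "Min (f ` A) \<in> f ` A" "Min (g ` A) \<in> g ` A" using assms by (auto intro: Min_in)
  then obtain a b where a: "a \<in> A" "Min (f ` A) = f a" and b: "b \<in> A" "Min (g ` A) = g b" by auto
  have "Min (g ` A) \<le> g a" "Min (f ` A) \<le> f b" using a(1) b(1) assms(1) by auto
  then show ?thesis using a b assms(3) by (smt (verit))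
qed

lemma nonpos_if_le_geometric:
  fixes x C \<gamma> :: real
  assumes "\<bar>\<gamma>\<bar> < 1" and "\<forall>k. x \<le> C * \<gamma> ^ k"
  shows "x \<le> 0"
proof -
  have "(\<lambda>k. C * \<gamma> ^ k) \<longlonglongrightarrow> C * 0"
    by (intro tendsto_mult tendsto_const LIMSEQ_power_zero) (use assms in auto)
  then show ?thesis using assms(2) by (simp add: LIMSEQ_le_const)
qed

lemma hist_not_Nil [simp]: "hist N \<rho> s0 t \<noteq> []"
  by (cases t) auto

lemma last_hist: "last (hist N \<rho> s0 t) = play N \<rho> s0 t"
  by (simp add: play_def)

lemma play_0 [simp]: "play N \<rho> s0 0 = s0"
  by (simp add: play_def)

lemma play_Suc:
  "play N \<rho> s0 (Suc t) = move N (play N \<rho> s0 t) (\<rho> (snd (play N \<rho> s0 t)) (hist N \<rho> s0 t))"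
  by (simp add: play_def)

lemma abs_reward_le_1:
  assumes "0 \<le> \<epsilon>" "\<epsilon> \<le> 1"
  shows "\<bar>reward N m \<epsilon> s\<bar> \<le> 1"
proof -
  have "\<bar>c / real k\<bar> \<le> 1" if "0 \<le> c" "c \<le> 1" for c :: real and k :: nat
    using that by (cases "k = 0") (auto simp: field_simps)
  from this[of 1] this[of "1 - \<epsilon>"] this[of \<epsilon>] show ?thesis
    using assms unfolding reward_def Let_def by auto
qed

lemma reward_nonneg:
  assumes "m \<noteq> N" "0 \<le> \<epsilon>" "\<epsilon> \<le> 1"
  shows "0 \<le> reward N m \<epsilon> s"
  using assms unfolding reward_def Let_def by auto


section \<open>Optimal positional strategies by value iteration\<close>

locale discounted_capture_game =
  fixes V :: "'v set" and E :: "'v \<Rightarrow> 'v \<Rightarrow> bool" and N :: nat and \<gamma> :: real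
  assumes graph: "simple_connected_graph V E"
    and discount_pos: "0 < \<gamma>" and discount_less_1: "\<gamma> < 1"
begin

lemma abs_discount_less_1: "\<bar>\<gamma>\<bar> < 1"
  using discount_pos discount_less_1 by simp

definition moves :: "'v state \<Rightarrow> 'v set" where
  "moves s = cnbhd E (fst s (snd s))"

lemma finite_moves: "finite (moves s)"
proof -
  have "moves s \<subseteq> insert (fst s (snd s)) V"
    using graph unfolding moves_def cnbhd_def simple_connected_graph_def by auto
  then show ?thesis using graph finite_subset unfolding simple_connected_graph_def by blast
qed

lemma stay_in_moves: "fst s (snd s) \<in> moves s"
  by (simp add: moves_def cnbhd_def)

lemma moves_nonempty: "moves s \<noteq> {}"
  using stay_in_moves by blast

lemma move_in_States: "s \<in> States V N \<Longrightarrow> u \<in> moves s \<Longrightarrow> move N s u \<in> States V N"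
  using graph unfolding States_def move_def moves_def cnbhd_def simple_connected_graph_def next_tok_def
  by auto

definition cont :: "('v state \<Rightarrow> real) \<Rightarrow> ('v state \<Rightarrow> real) \<Rightarrow> 'v state \<Rightarrow> real" where
  "cont r w s = (if capture N s then r s else w s)"

text \<open>\<open>bellman m r\<close> is the Shapley operator of \<open>\<Gamma>\<^sup>m\<^sub>N\<close> with terminal reward \<open>r\<close>.\<close>

definition bellman :: "nat \<Rightarrow> ('v state \<Rightarrow> real) \<Rightarrow> ('v state \<Rightarrow> real) \<Rightarrow> 'v state \<Rightarrow> real" where
  "bellman m r w s =
     (if capture N s then 0
      else if snd s = m then \<gamma> * Max ((\<lambda>u. cont r w (move N s u)) ` moves s)
      else \<gamma> * Min ((\<lambda>u. cont r w (move N s u)) ` moves s))"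

lemma cont_uminus: "cont (\<lambda>s. - r s) (\<lambda>s. - w s) s = - cont r w s"
  by (simp add: cont_def)

lemma bellman_lipschitz:
  assumes "\<And>s'. \<bar>cont r w s' - cont r' w' s'\<bar> \<le> c"
  shows "\<bar>bellman m r w s - bellman m r' w' s\<bar> \<le> \<gamma> * c"
proof -
  have c: "\<forall>u\<in>moves s. \<bar>cont r w (move N s u) - cont r' w' (move N s u)\<bar> \<le> c"
    using assms by blast
  have "0 \<le> c" using order_trans[OF abs_ge_zero assms] .
  with Max_image_diff_le[OF finite_moves moves_nonempty c]
    Min_image_diff_le[OF finite_moves moves_nonempty c]
  show ?thesis
    using discount_pos unfolding bellman_def by (auto simp: right_diff_distrib[symmetric] abs_mult)
qed

lemma bellman_zero: "bellman m (\<lambda>_. 0) (\<lambda>_. 0) s = 0"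
proof -
  have "(\<lambda>u. cont (\<lambda>_. 0) (\<lambda>_. 0) (move N s u)) ` moves s = {0}"
    using moves_nonempty[of s] by (simp add: cont_def image_constant_conv)
  then show ?thesis by (simp add: bellman_def)
qed

definition value_iter :: "nat \<Rightarrow> ('v state \<Rightarrow> real) \<Rightarrow> nat \<Rightarrow> 'v state \<Rightarrow> real" where
  "value_iter m r k = (bellman m r ^^ k) (\<lambda>_. 0)"

lemma value_iter_0: "value_iter m r 0 = (\<lambda>_. 0)"
  by (simp add: value_iter_def)

lemma value_iter_Suc: "value_iter m r (Suc k) = bellman m r (value_iter m r k)"
  by (simp add: value_iter_def)

lemma value_iter_step_le:
  assumes r: "\<forall>s. \<bar>r s\<bar> \<le> 1"
  shows "\<bar>value_iter m r (Suc k) s - value_iter m r k s\<bar> \<le> \<gamma> ^ k"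
proof (induction k arbitrary: s)
  case 0
  have "\<bar>cont r (\<lambda>_. 0) s' - cont (\<lambda>_. 0) (\<lambda>_. 0) s'\<bar> \<le> 1" for s'
    using r[rule_format, of s'] by (simp add: cont_def)
  from bellman_lipschitz[OF this, of m s] show ?case
    using discount_less_1 by (simp add: value_iter_0 value_iter_Suc bellman_zero)
next
  case (Suc k)
  have "\<bar>cont r (value_iter m r (Suc k)) s' - cont r (value_iter m r k) s'\<bar> \<le> \<gamma> ^ k" for s'
    using Suc discount_pos by (simp add: cont_def)
  from bellman_lipschitz[OF this, of m s] show ?case
    by (simp add: value_iter_Suc[of m r "Suc k"] value_iter_Suc[of m r k])
qed

definition game_value :: "nat \<Rightarrow> ('v state \<Rightarrow> real) \<Rightarrow> 'v state \<Rightarrow> real" where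
  "game_value m r s = (\<Sum>i. value_iter m r (Suc i) s - value_iter m r i s)"

lemma game_value_approx:
  assumes r: "\<forall>s. \<bar>r s\<bar> \<le> 1"
  shows "\<bar>game_value m r s - value_iter m r k s\<bar> \<le> \<gamma> ^ k / (1 - \<gamma>)"
proof -
  let ?d = "\<lambda>i. value_iter m r (Suc i) s - value_iter m r i s"
  let ?g = "\<lambda>i. \<gamma> ^ k * \<gamma> ^ i"
  have geom: "summable (\<lambda>i. \<gamma> ^ i)" using abs_discount_less_1 by (simp add: summable_geometric)
  then have "summable ?g" by (rule summable_mult)
  have d_le: "\<bar>?d (i + k)\<bar> \<le> ?g i" for i
    using value_iter_step_le[OF r, of m "i + k" s] by (simp add: power_add mult.commute)
  have "summable ?d"
    by (rule summable_comparison_test[OF _ geom]) (use value_iter_step_le[OF r] in auto)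
  then have split: "game_value m r s = (\<Sum>i. ?d (i + k)) + sum ?d {..<k}"
    unfolding game_value_def by (rule suminf_split_initial_segment)
  have "summable (\<lambda>i. \<bar>?d (i + k)\<bar>)"
    by (rule summable_comparison_test'[OF \<open>summable ?g\<close>]) (use d_le in simp)
  then have "\<bar>\<Sum>i. ?d (i + k)\<bar> \<le> (\<Sum>i. \<bar>?d (i + k)\<bar>)" by (rule summable_rabs)
  also have "\<dots> \<le> (\<Sum>i. ?g i)"
    by (rule suminf_le[OF d_le \<open>summable (\<lambda>i. \<bar>?d (i + k)\<bar>)\<close> \<open>summable ?g\<close>])
  finally have tail: "\<bar>\<Sum>i. ?d (i + k)\<bar> \<le> (\<Sum>i. ?g i)" .
  have "sum ?d {..<k} = value_iter m r k s"
    using sum_lessThan_telescope[of "\<lambda>i. value_iter m r i s" k] by (simp add: value_iter_0)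
  moreover have "(\<Sum>i. ?g i) = \<gamma> ^ k / (1 - \<gamma>)"
    using suminf_mult[OF geom, of "\<gamma> ^ k"] suminf_geometric[of \<gamma>] abs_discount_less_1 by simp
  ultimately show ?thesis using split tail by simp
qed

lemma abs_game_value_le:
  "\<forall>s. \<bar>r s\<bar> \<le> 1 \<Longrightarrow> \<bar>game_value m r s\<bar> \<le> 1 / (1 - \<gamma>)"
  using game_value_approx[of r m s 0] by (simp add: value_iter_0)

lemma bellman_game_value:
  assumes r: "\<forall>s. \<bar>r s\<bar> \<le> 1"
  shows "bellman m r (game_value m r) s = game_value m r s"
proof -
  have "\<bar>bellman m r (game_value m r) s - game_value m r s\<bar> \<le> 2 / (1 - \<gamma>) * \<gamma> ^ k" for k
  proof -
    have "\<bar>cont r (game_value m r) s' - cont r (value_iter m r k) s'\<bar> \<le> \<gamma> ^ k / (1 - \<gamma>)" for s'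
      using game_value_approx[OF r] discount_pos discount_less_1 by (simp add: cont_def)
    from bellman_lipschitz[OF this, of m s]
    have "\<bar>bellman m r (game_value m r) s - value_iter m r (Suc k) s\<bar> \<le> \<gamma> * (\<gamma> ^ k / (1 - \<gamma>))"
      by (simp add: value_iter_Suc)
    moreover have "\<gamma> * (\<gamma> ^ k / (1 - \<gamma>)) \<le> \<gamma> ^ k / (1 - \<gamma>)"
      using discount_pos discount_less_1 by (intro mult_left_le_one_le) auto
    moreover have "\<bar>game_value m r s - value_iter m r (Suc k) s\<bar> \<le> \<gamma> ^ k / (1 - \<gamma>)"
      using game_value_approx[OF r, of m s "Suc k"] discount_pos discount_less_1
      by (smt (verit) divide_right_mono mult_left_le_one_le power_Suc zero_le_power)
    ultimately show ?thesis by simp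
  qed
  then have "\<bar>bellman m r (game_value m r) s - game_value m r s\<bar> \<le> 0"
    using nonpos_if_le_geometric[OF abs_discount_less_1] by blast
  then show ?thesis by simp
qed

lemma value_iter_nonneg:
  assumes "\<forall>s. 0 \<le> r s"
  shows "0 \<le> value_iter m r k s"
proof (induction k arbitrary: s)
  case 0
  then show ?case by (simp add: value_iter_0)
next
  case (Suc k)
  let ?A = "(\<lambda>u. cont r (value_iter m r k) (move N s u)) ` moves s"
  have "0 \<le> cont r (value_iter m r k) s'" for s'
    using Suc.IH[of s'] assms[rule_format, of s'] by (simp add: cont_def)
  then have "\<forall>a\<in>?A. 0 \<le> a" by blast
  then have "0 \<le> Max ?A" "0 \<le> Min ?A"
    using finite_moves[of s] moves_nonempty[of s] by (auto simp: Max_ge_iff Min_ge_iff)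
  then show ?case using discount_pos by (simp add: value_iter_Suc bellman_def)
qed

lemma game_value_nonneg:
  assumes "\<forall>s. \<bar>r s\<bar> \<le> 1" and "\<forall>s. 0 \<le> r s"
  shows "0 \<le> game_value m r s"
proof -
  have "- game_value m r s \<le> \<gamma> ^ k / (1 - \<gamma>)" for k
    using game_value_approx[OF assms(1), of m s k] value_iter_nonneg[OF assms(2), of m k s] by linarith
  then have "\<forall>k. - game_value m r s \<le> 1 / (1 - \<gamma>) * \<gamma> ^ k" by simp
  then show ?thesis using nonpos_if_le_geometric[OF abs_discount_less_1] by fastforce
qed

lemma game_value_ge_move:
  assumes "\<forall>s. \<bar>r s\<bar> \<le> 1" "\<not> capture N s" "snd s = m" "u \<in> moves s"
  shows "\<gamma> * cont r (game_value m r) (move N s u) \<le> game_value m r s"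
proof -
  have "\<gamma> * cont r (game_value m r) (move N s u)
      \<le> \<gamma> * Max ((\<lambda>u. cont r (game_value m r) (move N s u)) ` moves s)"
    using finite_moves assms(4) discount_pos by (intro mult_left_mono) auto
  also have "\<dots> = game_value m r s"
    using bellman_game_value[OF assms(1), of m s] assms(2,3) by (simp add: bellman_def)
  finally show ?thesis .
qed

lemma game_value_le_move:
  assumes "\<forall>s. \<bar>r s\<bar> \<le> 1" "\<not> capture N s" "snd s \<noteq> m" "u \<in> moves s"
  shows "game_value m r s \<le> \<gamma> * cont r (game_value m r) (move N s u)"
proof -
  have "game_value m r s = \<gamma> * Min ((\<lambda>u. cont r (game_value m r) (move N s u)) ` moves s)"
    using bellman_game_value[OF assms(1), of m s] assms(2,3) by (simp add: bellman_def)
  also have "\<dots> \<le> \<gamma> * cont r (game_value m r) (move N s u)"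
    using finite_moves assms(4) discount_pos by (intro mult_left_mono) auto
  finally show ?thesis .
qed

definition optimal_move :: "nat \<Rightarrow> ('v state \<Rightarrow> real) \<Rightarrow> 'v state \<Rightarrow> 'v \<Rightarrow> bool" where
  "optimal_move m r s u \<longleftrightarrow>
     u \<in> moves s \<and> \<gamma> * cont r (game_value m r) (move N s u) = bellman m r (game_value m r) s"

text \<open>Among the optimal moves an immediately capturing one is preferred; this tie-breaking is what
  makes the trigger strategies built from \<open>greedy\<close> nonpositional.\<close>

definition greedy :: "nat \<Rightarrow> ('v state \<Rightarrow> real) \<Rightarrow> 'v state \<Rightarrow> 'v" where
  "greedy m r s =
     (if capture N s then fst s (snd s)
      else if \<exists>u. optimal_move m r s u \<and> capture N (move N s u)
      then SOME u. optimal_move m r s u \<and> capture N (move N s u)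
      else SOME u. optimal_move m r s u)"

lemma ex_optimal_move:
  assumes "\<not> capture N s"
  shows "\<exists>u. optimal_move m r s u"
proof -
  let ?A = "(\<lambda>u. cont r (game_value m r) (move N s u)) ` moves s"
  have "finite ?A" "?A \<noteq> {}" using finite_moves moves_nonempty by auto
  then have "Max ?A \<in> ?A" "Min ?A \<in> ?A" by (auto intro: Max_in Min_in)
  then show ?thesis using assms unfolding optimal_move_def bellman_def by (cases "snd s = m") auto
qed

lemma optimal_move_greedy: "\<not> capture N s \<Longrightarrow> optimal_move m r s (greedy m r s)"
  unfolding greedy_def using ex_optimal_move[of s m r]
  by (auto intro: someI_ex[of "\<lambda>u. optimal_move m r s u \<and> capture N (move N s u)", THEN conjunct1]
                  someI_ex[of "\<lambda>u. optimal_move m r s u"])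

lemma greedy_in_moves: "greedy m r s \<in> moves s"
  using optimal_move_greedy[of s m r] stay_in_moves[of s]
  by (cases "capture N s") (auto simp: greedy_def optimal_move_def)

lemma greedy_captures:
  assumes "\<not> capture N s" "optimal_move m r s u" "capture N (move N s u)"
  shows "capture N (move N s (greedy m r s))"
  using assms unfolding greedy_def
  by (auto intro: someI_ex[of "\<lambda>u. optimal_move m r s u \<and> capture N (move N s u)", THEN conjunct2])

lemma game_value_greedy:
  assumes "\<forall>s. \<bar>r s\<bar> \<le> 1" "\<not> capture N s"
  shows "\<gamma> * cont r (game_value m r) (move N s (greedy m r s)) = game_value m r s"
  using optimal_move_greedy[OF assms(2), of m r] bellman_game_value[OF assms(1)]
  by (simp add: optimal_move_def)

lemma legal_hs_greedy: "legal_hs V E N n (\<lambda>h. greedy m r (last h))"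
  unfolding legal_hs_def by (metis greedy_in_moves moves_def)

definition disc_payoff :: "('v state \<Rightarrow> real) \<Rightarrow> (nat \<Rightarrow> 'v hstrat) \<Rightarrow> 'v state \<Rightarrow> real" where
  "disc_payoff r \<rho> s0 =
     (if \<exists>t. capture N (play N \<rho> s0 t)
      then (let t = (LEAST t. capture N (play N \<rho> s0 t)) in r (play N \<rho> s0 t) * \<gamma> ^ t)
      else 0)"

lemma payoff_eq_disc_payoff: "payoff N m \<gamma> \<epsilon> s0 \<rho> = disc_payoff (reward N m \<epsilon>) \<rho> s0"
  by (simp add: payoff_def disc_payoff_def)

lemma disc_payoff_uminus: "disc_payoff (\<lambda>s. - r s) \<rho> s0 = - disc_payoff r \<rho> s0"
  by (simp add: disc_payoff_def Let_def)

lemma le_disc_payoff: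
  assumes nc: "\<not> capture N s0" and bounded: "\<And>s. \<bar>w s\<bar> \<le> B"
    and step: "\<forall>t. (\<forall>t'\<le>t. \<not> capture N (play N \<rho> s0 t')) \<longrightarrow>
                    w (play N \<rho> s0 t) \<le> \<gamma> * cont r w (play N \<rho> s0 (Suc t))"
  shows "w s0 \<le> disc_payoff r \<rho> s0"
proof -
  let ?p = "play N \<rho> s0"
  have inv: "w s0 \<le> \<gamma> ^ T * w (?p T)" if "\<forall>t'\<le>T. \<not> capture N (?p t')" for T
    using that
  proof (induction T)
    case (Suc T)
    then have "w s0 \<le> \<gamma> ^ T * w (?p T)" by simp
    also have "\<dots> \<le> \<gamma> ^ T * (\<gamma> * cont r w (?p (Suc T)))"
      using step Suc.prems discount_pos by (intro mult_left_mono) auto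
    finally show ?case using Suc.prems by (simp add: cont_def mult_ac)
  qed simp
  show ?thesis
  proof (cases "\<exists>t. capture N (?p t)")
    case True
    define t where "t = (LEAST t. capture N (?p t))"
    have ct: "capture N (?p t)" unfolding t_def using True by (metis LeastI)
    then obtain t0 where t0: "t = Suc t0" using nc by (cases t) auto
    have before: "\<forall>t'\<le>t0. \<not> capture N (?p t')"
      using not_less_Least[of _ "\<lambda>t. capture N (?p t)"] unfolding t_def[symmetric] t0 by auto
    have "w s0 \<le> \<gamma> ^ t0 * w (?p t0)" using inv[OF before] .
    also have "\<dots> \<le> \<gamma> ^ t0 * (\<gamma> * cont r w (?p t))"
      using step before discount_pos t0 by (intro mult_left_mono) auto
    also have "\<dots> = r (?p t) * \<gamma> ^ t" using ct t0 by (simp add: cont_def)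
    finally show ?thesis using True unfolding disc_payoff_def t_def by (simp add: Let_def)
  next
    case False
    have "\<forall>T. w s0 \<le> B * \<gamma> ^ T"
    proof
      fix T
      have "w s0 \<le> \<gamma> ^ T * w (?p T)" using inv False by blast
      also have "\<dots> \<le> \<gamma> ^ T * B"
        using abs_le_D1[OF bounded] discount_pos by (intro mult_left_mono) auto
      finally show "w s0 \<le> B * \<gamma> ^ T" by (simp add: mult.commute)
    qed
    then show ?thesis
      using False nonpos_if_le_geometric[OF abs_discount_less_1] unfolding disc_payoff_def by simp
  qed
qed

lemma disc_payoff_le:
  assumes nc: "\<not> capture N s0" and bounded: "\<And>s. \<bar>w s\<bar> \<le> B"
    and step: "\<forall>t. (\<forall>t'\<le>t. \<not> capture N (play N \<rho> s0 t')) \<longrightarrow>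
                    \<gamma> * cont r w (play N \<rho> s0 (Suc t)) \<le> w (play N \<rho> s0 t)"
  shows "disc_payoff r \<rho> s0 \<le> w s0"
proof -
  have "- w s0 \<le> disc_payoff (\<lambda>s. - r s) \<rho> s0"
    by (rule le_disc_payoff[OF nc, of "\<lambda>s. - w s" B \<rho> "\<lambda>s. - r s"])
      (use bounded step in \<open>auto simp: cont_uminus\<close>)
  then show ?thesis by (simp add: disc_payoff_uminus)
qed

lemma legal_choice_in_moves:
  assumes "play N \<rho> s0 t \<in> States V N" and legal: "\<forall>n\<in>{1..N}. legal_hs V E N n (\<rho> n)"
  shows "\<rho> (snd (play N \<rho> s0 t)) (hist N \<rho> s0 t) \<in> moves (play N \<rho> s0 t)"
proof -
  let ?n = "snd (play N \<rho> s0 t)"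
  have "?n \<in> {1..N}" using assms(1) unfolding States_def by auto
  then have "\<forall>h. h \<noteq> [] \<and> last h \<in> States V N \<and> snd (last h) = ?n
      \<longrightarrow> \<rho> ?n h \<in> cnbhd E (fst (last h) ?n)"
    using legal unfolding legal_hs_def by blast
  from this[rule_format, of "hist N \<rho> s0 t"] show ?thesis
    using assms(1) by (simp add: last_hist moves_def)
qed

lemma play_in_States:
  assumes "s0 \<in> States V N" and legal: "\<forall>n\<in>{1..N}. legal_hs V E N n (\<rho> n)"
  shows "play N \<rho> s0 t \<in> States V N"
proof (induction t)
  case (Suc t)
  then show ?case using move_in_States[OF Suc legal_choice_in_moves[OF Suc legal]] by (simp add: play_Suc)
qed (use assms in simp)

lemma disc_payoff_le_game_value:
  assumes r: "\<forall>s. \<bar>r s\<bar> \<le> 1" and s0: "s0 \<in> States V N" "\<not> capture N s0"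
    and legal: "\<forall>n\<in>{1..N}. legal_hs V E N n (\<rho> n)"
    and others: "\<forall>n h. n \<noteq> m \<longrightarrow> \<rho> n h = greedy m r (last h)"
  shows "disc_payoff r \<rho> s0 \<le> game_value m r s0"
proof (rule disc_payoff_le[OF s0(2) abs_game_value_le[OF r, of m]], intro allI impI)
  fix t
  let ?s = "play N \<rho> s0 t" and ?u = "\<rho> (snd (play N \<rho> s0 t)) (hist N \<rho> s0 t)"
  assume "\<forall>t'\<le>t. \<not> capture N (play N \<rho> s0 t')"
  then have nc: "\<not> capture N ?s" by blast
  have "?u \<in> moves ?s" using legal_choice_in_moves[OF play_in_States[OF s0(1) legal] legal] .
  have "\<gamma> * cont r (game_value m r) (move N ?s ?u) \<le> game_value m r ?s"
  proof (cases "snd ?s = m")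
    case True
    show ?thesis using game_value_ge_move[OF r nc True \<open>?u \<in> moves ?s\<close>] by blast
  next
    case False
    then show ?thesis using game_value_greedy[OF r nc] others by (simp add: last_hist)
  qed
  then show "\<gamma> * cont r (game_value m r) (play N \<rho> s0 (Suc t)) \<le> game_value m r ?s"
    by (simp add: play_Suc)
qed

lemma game_value_le_disc_payoff:
  assumes r: "\<forall>s. \<bar>r s\<bar> \<le> 1" and s0: "s0 \<in> States V N" "\<not> capture N s0"
    and legal: "\<forall>n\<in>{1..N}. legal_hs V E N n (\<rho> n)"
    and player: "\<forall>h. \<rho> m h = greedy m r (last h)"
  shows "game_value m r s0 \<le> disc_payoff r \<rho> s0"
proof (rule le_disc_payoff[OF s0(2) abs_game_value_le[OF r, of m]], intro allI impI)
  fix t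
  let ?s = "play N \<rho> s0 t" and ?u = "\<rho> (snd (play N \<rho> s0 t)) (hist N \<rho> s0 t)"
  assume "\<forall>t'\<le>t. \<not> capture N (play N \<rho> s0 t')"
  then have nc: "\<not> capture N ?s" by blast
  have "?u \<in> moves ?s" using legal_choice_in_moves[OF play_in_States[OF s0(1) legal] legal] .
  have "game_value m r ?s \<le> \<gamma> * cont r (game_value m r) (move N ?s ?u)"
  proof (cases "snd ?s = m")
    case True
    then show ?thesis using game_value_greedy[OF r nc] player by (simp add: last_hist)
  next
    case False
    show ?thesis using game_value_le_move[OF r nc False \<open>?u \<in> moves ?s\<close>] by blast
  qed
  then show "game_value m r ?s \<le> \<gamma> * cont r (game_value m r) (play N \<rho> s0 (Suc t))"
    by (simp add: play_Suc)
qed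

lemma optimal_pair_greedy:
  assumes r: "\<forall>s :: 'v state. \<bar>reward N m \<epsilon> s\<bar> \<le> 1"
  shows "optimal_pair V E N \<gamma> \<epsilon> m (\<lambda>n. greedy m (reward N m \<epsilon>))"
proof -
  let ?r = "reward N m \<epsilon>"
  let ?\<rho> = "pos_profile (\<lambda>n. greedy m ?r)"
  have \<rho>: "?\<rho> = (\<lambda>n h. greedy m ?r (last h))" by (simp add: pos_profile_def)
  have legal: "legal_hs V E N n (?\<rho> n)" for n using legal_hs_greedy by (simp add: \<rho>)
  have "disc_payoff ?r (?\<rho>(m := \<sigma>)) s0 \<le> disc_payoff ?r ?\<rho> s0"
    if s0: "s0 \<in> States V N" "\<not> capture N s0" and "legal_hs V E N m \<sigma>" for s0 \<sigma>
    by (rule order_trans[OF disc_payoff_le_game_value[OF r s0] game_value_le_disc_payoff[OF r s0]])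
      (use legal that in \<open>auto simp: \<rho>\<close>)
  moreover have "disc_payoff ?r ?\<rho> s0 \<le> disc_payoff ?r (\<tau>(m := ?\<rho> m)) s0"
    if s0: "s0 \<in> States V N" "\<not> capture N s0" and "\<forall>n\<in>{1..N}. legal_hs V E N n (\<tau> n)" for s0 \<tau>
    by (rule order_trans[OF disc_payoff_le_game_value[OF r s0] game_value_le_disc_payoff[OF r s0]])
      (use legal that in \<open>auto simp: \<rho>\<close>)
  moreover have "\<forall>n\<in>{1..N}. legal_pos V E N n (greedy m ?r)"
    unfolding legal_pos_def by (metis greedy_in_moves moves_def)
  ultimately show ?thesis unfolding optimal_pair_def payoff_eq_disc_payoff by blast
qed

lemma greedy_sacrifice:
  assumes "N \<ge> 2" and m: "m \<in> {1..N-1}" and nc: "\<not> capture N (x, N)" and c: "c \<in> {1..N-1}"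
    and adjacent: "E (x N) (x c)" and elsewhere: "x m \<noteq> x c"
  shows "capture N (move N (x, N) (greedy m (reward N m 0) (x, N)))"
proof -
  let ?r = "reward N m 0" and ?s = "(x, N)"
  have r: "\<forall>s :: 'v state. \<bar>?r s\<bar> \<le> 1" by (simp add: abs_reward_le_1)
  have "m \<noteq> N" using m by auto
  then have r_nonneg: "\<forall>s :: 'v state. 0 \<le> ?r s" by (simp add: reward_nonneg)
  have x': "fst (move N ?s (x c)) = x(N := x c)" by (simp add: move_def)
  have "x c \<in> moves ?s" using adjacent by (simp add: moves_def cnbhd_def)
  have cap: "capture N (move N ?s (x c))" using c unfolding capture_def x' by auto
  let ?K = "{i\<in>{1..N-1}. fst (move N ?s (x c)) i = fst (move N ?s (x c)) N}"
  have "?K \<subseteq> {1..N-1} - {m}" using elsewhere by (auto simp: x')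
  then have "card ?K \<le> card ({1..N-1} - {m})" by (intro card_mono) auto
  also have "\<dots> < N - 1" using m assms(1) by simp
  finally have "card ?K \<noteq> N - 1" by simp
  moreover have "fst (move N ?s (x c)) m \<noteq> fst (move N ?s (x c)) N" using elsewhere \<open>m \<noteq> N\<close> x' by simp
  ultimately have reward_0: "?r (move N ?s (x c)) = 0"
    using \<open>m \<noteq> N\<close> unfolding reward_def Let_def by simp
  have "0 \<le> cont ?r (game_value m ?r) s'" for s'
    using game_value_nonneg[OF r r_nonneg, of m s'] r_nonneg[rule_format, of s'] by (simp add: cont_def)
  then have "\<forall>a\<in>(\<lambda>u. cont ?r (game_value m ?r) (move N ?s u)) ` moves ?s. 0 \<le> a" by blast
  moreover have "0 \<in> (\<lambda>u. cont ?r (game_value m ?r) (move N ?s u)) ` moves ?s"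
    using \<open>x c \<in> moves ?s\<close> cap reward_0 by (force simp: cont_def)
  ultimately have "bellman m ?r (game_value m ?r) ?s = 0"
    using nc m finite_moves[of ?s] by (auto simp: bellman_def intro!: Min_eqI)
  then have "optimal_move m ?r ?s (x c)"
    using \<open>x c \<in> moves ?s\<close> cap reward_0 by (simp add: optimal_move_def cont_def)
  then show ?thesis using greedy_captures[OF nc _ cap] by blast
qed

end


section \<open>CR-optimal robbers avoid capture\<close>

lemma payoff_robber_captured_at_1:
  assumes "\<not> capture N s" "capture N (play N \<rho> s 1)"
  shows "payoff N N \<gamma> \<epsilon> s \<rho> = - \<gamma>"
proof -
  have "(LEAST t. capture N (play N \<rho> s t)) = 1"
  proof (rule Least_equality)
    fix t
    assume "capture N (play N \<rho> s t)"
    then show "1 \<le> t" using assms(1) by (cases t) auto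
  qed (use assms in simp)
  then show ?thesis using assms unfolding payoff_def reward_def by auto
qed

lemma payoff_robber_late_capture_ge:
  assumes "0 < \<gamma>" "\<gamma> < 1" "\<not> capture N s" "\<not> capture N (play N \<rho> s 1)"
  shows "- (\<gamma> ^ 2) \<le> payoff N N \<gamma> \<epsilon> s \<rho>"
proof (cases "\<exists>t. capture N (play N \<rho> s t)")
  case True
  define t where "t = (LEAST t. capture N (play N \<rho> s t))"
  have captured: "capture N (play N \<rho> s t)" unfolding t_def using True by (metis LeastI)
  have "t \<noteq> 0" using captured assms(3) by (cases "t = 0") auto
  moreover have "t \<noteq> 1" using captured assms(4) by (cases "t = 1") auto
  ultimately have "2 \<le> t" by linarith
  then have "\<gamma> ^ t \<le> \<gamma> ^ 2" using assms(1,2) by (intro power_decreasing) auto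
  then show ?thesis using True unfolding payoff_def reward_def t_def[symmetric] by (simp add: Let_def)
qed (simp add: payoff_def)

text \<open>Standing still earns the robber at least \<open>-\<gamma>\<^sup>2 > -\<gamma>\<close>.\<close>

lemma CR_optimal_robber_avoids_capture:
  assumes "0 < \<gamma>" "\<gamma> < 1" and opt: "optimal_pair V E N \<gamma> \<epsilon> N \<phi>"
    and s: "s \<in> States V N" "\<not> capture N s" "snd s = N"
  shows "\<not> capture N (move N s (\<phi> N s))"
proof
  assume captured: "capture N (move N s (\<phi> N s))"
  define stay :: "'a hstrat" where "stay = (\<lambda>h. fst (last h) N)"
  have "legal_hs V E N N stay" unfolding legal_hs_def stay_def cnbhd_def by auto
  then have "payoff N N \<gamma> \<epsilon> s ((pos_profile \<phi>)(N := stay))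
      \<le> payoff N N \<gamma> \<epsilon> s (pos_profile \<phi>)"
    using opt s unfolding optimal_pair_def by blast
  moreover have "payoff N N \<gamma> \<epsilon> s (pos_profile \<phi>) = - \<gamma>"
    by (rule payoff_robber_captured_at_1)
      (use s captured in \<open>simp_all add: play_def pos_profile_def One_nat_def\<close>)
  moreover have "- (\<gamma> ^ 2) \<le> payoff N N \<gamma> \<epsilon> s ((pos_profile \<phi>)(N := stay))"
    by (rule payoff_robber_late_capture_ge)
      (use assms in \<open>auto simp: play_def stay_def move_def capture_def One_nat_def\<close>)
  moreover have "\<gamma> ^ 2 < \<gamma>" using assms(1,2) by (simp add: power2_eq_square)
  ultimately show False by linarith
qed


section \<open>Reaching a state where the robber can walk onto a cop\<close>

lemma reach_in_States:
  assumes "s \<in> reach E N s0" "s0 \<in> States V N" "simple_connected_graph V E"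
  shows "s \<in> States V N"
  using assms(1)
proof induction
  case (step s v)
  have "v \<in> V" using step assms(3) unfolding States_def cnbhd_def simple_connected_graph_def by auto
  then show ?case using step unfolding States_def move_def next_tok_def by auto
qed (use assms(2) in simp)

lemma reach_stay_put:
  assumes "(x, i) \<in> reach E N s0" "\<not> capture N (x, i)" "1 \<le> i" "i + d \<le> N"
  shows "(x, i + d) \<in> reach E N s0"
  using assms(4)
proof (induction d)
  case (Suc d)
  then have "(x, i + d) \<in> reach E N s0" by simp
  moreover have "move N (x, i + d) (x (i + d)) = (x, i + Suc d)"
    using Suc.prems by (simp add: move_def next_tok_def)
  moreover have "\<not> capture N (x, i + d)" using assms(2) by (simp add: capture_def)
  ultimately show ?case using reach.step[of "(x, i + d)" E N s0 "x (i + d)"] by (simp add: cnbhd_def)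
qed (use assms in simp)

lemma reach_robber_then_cop_1:
  assumes N: "N \<ge> 2" and "(x, N) \<in> reach E N s0" "\<not> capture N (x, N)"
    and "v \<in> cnbhd E (x N)" "\<not> capture N (x(N := v), 1)"
    and "y \<in> cnbhd E (x 1)" "\<not> capture N (x(N := v, 1 := y), N)"
  shows "(x(N := v, 1 := y), N) \<in> reach E N s0"
proof -
  have "(x(N := v), 1) \<in> reach E N s0"
    using reach.step[of "(x, N)" E N s0 v] assms by (simp add: move_def next_tok_def)
  then have "(x(N := v, 1 := y), 2) \<in> reach E N s0"
    using reach.step[of "(x(N := v), 1)" E N s0 y] assms
    by (simp add: move_def next_tok_def numeral_2_eq_2)
  moreover have "\<not> capture N (x(N := v, 1 := y), 2)" using assms(7) by (simp add: capture_def)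
  ultimately have "(x(N := v, 1 := y), 2 + (N - 2)) \<in> reach E N s0"
    by (rule reach_stay_put) (use N in auto)
  then show ?thesis using le_add_diff_inverse[OF N] by metis
qed

lemma exists_other_neighbour:
  assumes G: "simple_connected_graph V E" and "card V \<ge> 3"
    and "E a b" and only: "\<forall>y. E b y \<longrightarrow> y = a"
  shows "\<exists>z. E a z \<and> z \<noteq> b"
proof -
  have "finite V" "a \<in> V" "b \<in> V" using G assms(3) unfolding simple_connected_graph_def by auto
  moreover have "card {a, b} \<le> 2" by (simp add: card_insert_if)
  ultimately have "\<not> V \<subseteq> {a, b}" using assms(2) card_mono[of "{a, b}" V] by auto
  then obtain z0 where z0: "z0 \<in> V" "z0 \<noteq> a" "z0 \<noteq> b" by auto
  have "E\<^sup>*\<^sup>* a z0" using G \<open>a \<in> V\<close> z0 unfolding simple_connected_graph_def by auto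
  then have "z0 = a \<or> z0 = b \<or> (\<exists>z. E a z \<and> z \<noteq> b)"
    by induction (use only in auto)
  then show ?thesis using z0 by auto
qed

text \<open>The robber walks along a path to cop 1 while the cops stand still.\<close>

lemma reach_robber_adjacent_to_cop:
  assumes N: "N \<ge> 2"
  shows "(x, N) \<in> reach E N s0 \<Longrightarrow> \<not> capture N (x, N) \<Longrightarrow> (E ^^ k) (x N) (x 1) \<Longrightarrow>
    \<exists>x'. (x', N) \<in> reach E N s0 \<and> \<not> capture N (x', N) \<and> (\<exists>c\<in>{1..N-1}. E (x' N) (x' c))"
proof (induction k arbitrary: x)
  case 0
  then show ?case using N by (force simp: capture_def)
next
  case (Suc k)
  obtain v where v: "E (x N) v" "(E ^^ k) v (x 1)" using relpowp_Suc_E2[OF Suc.prems(3)] by blast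
  show ?case
  proof (cases "\<exists>c\<in>{1..N-1}. x c = v")
    case True
    then show ?thesis using Suc.prems v by auto
  next
    case False
    let ?x = "x(N := v, 1 := x 1)"
    have "\<not> capture N (x(N := v), 1)" "\<not> capture N (?x, N)" using False N by (auto simp: capture_def)
    then have "(?x, N) \<in> reach E N s0"
      using reach_robber_then_cop_1[OF N Suc.prems(1,2)] v by (simp add: cnbhd_def)
    moreover have "(E ^^ k) (?x N) (?x 1)" using v N by simp
    ultimately show ?thesis using Suc.IH \<open>\<not> capture N (?x, N)\<close> by blast
  qed
qed

lemma reach_robber_adjacent_to_one_of_two_cops:
  assumes G: "simple_connected_graph V E" and "card V \<ge> 3" and N: "N \<ge> 3"
    and r: "(x, N) \<in> reach E N s0" and nc: "\<not> capture N (x, N)"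
    and c: "c \<in> {1..N-1}" and adjacent: "E (x N) (x c)"
  shows "\<exists>x' c' m. (x', N) \<in> reach E N s0 \<and> \<not> capture N (x', N) \<and> c' \<in> {1..N-1} \<and> m \<in> {1..N-1}
           \<and> E (x' N) (x' c') \<and> x' m \<noteq> x' c'"
proof (cases "\<exists>m\<in>{1..N-1}. x m \<noteq> x c")
  case True
  then show ?thesis using r nc c adjacent by blast
next
  case False
  define w where "w = x c"
  have all: "\<forall>i\<in>{1..N-1}. x i = w" using False w_def by auto
  have "x 1 = w" "x 2 = w" using all N by auto
  have sym: "\<And>a b. E a b \<Longrightarrow> E b a" and irrefl: "\<And>a. \<not> E a a"
    using G unfolding simple_connected_graph_def by auto
  have "x N \<noteq> w" using adjacent irrefl w_def by metis
  show ?thesis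
  proof (cases "\<exists>y. E w y \<and> y \<noteq> x N")
    case True
    \<comment> \<open>cop 1 steps away from the cops' common vertex, keeping cop 2 next to the robber\<close>
    then obtain y where y: "E w y" "y \<noteq> x N" by blast
    let ?x = "x(N := x N, 1 := y)"
    have "\<not> capture N (?x, N)" using all y N \<open>x N \<noteq> w\<close> by (auto simp: capture_def)
    moreover have "(?x, N) \<in> reach E N s0"
      by (rule reach_robber_then_cop_1)
        (use N r nc calculation y \<open>x 1 = w\<close> in \<open>auto simp: cnbhd_def capture_def\<close>)
    moreover have "E (?x N) (?x 2)" "?x 1 \<noteq> ?x 2"
      using adjacent N \<open>x 2 = w\<close> w_def y irrefl by auto
    ultimately show ?thesis using N by (intro exI[of _ ?x] exI[of _ 2] exI[of _ 1]) auto
  next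
    case False
    \<comment> \<open>the robber is the only neighbour of the cops: it steps aside and cop 1 follows it\<close>
    obtain z where z: "E (x N) z" "z \<noteq> w"
      using exists_other_neighbour[OF G assms(2) adjacent[folded w_def]] False by blast
    let ?x = "x(N := z, 1 := x N)"
    have "z \<noteq> x N" using z irrefl by metis
    have "\<not> capture N (x(N := z), 1)" "\<not> capture N (?x, N)"
      using all z \<open>z \<noteq> x N\<close> N by (auto simp: capture_def)
    moreover have "(?x, N) \<in> reach E N s0"
      by (rule reach_robber_then_cop_1)
        (use N r nc calculation z \<open>x 1 = w\<close> adjacent w_def sym in \<open>auto simp: cnbhd_def\<close>)
    moreover have "E (?x N) (?x 1)" "?x 2 \<noteq> ?x 1" using z sym N \<open>x 2 = w\<close> \<open>x N \<noteq> w\<close> by auto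
    ultimately show ?thesis using N by (intro exI[of _ ?x] exI[of _ 1] exI[of _ 2]) auto
  qed
qed

lemma exists_reachable_sacrifice_state:
  assumes G: "simple_connected_graph V E" and "card V \<ge> 3" and N: "N \<ge> 3"
    and s0: "s0 \<in> States V N" "\<not> capture N s0"
  shows "\<exists>x c m. (x, N) \<in> reach E N s0 \<and> \<not> capture N (x, N) \<and> c \<in> {1..N-1} \<and> m \<in> {1..N-1}
           \<and> E (x N) (x c) \<and> x m \<noteq> x c"
proof -
  obtain x0 n0 where s0_def: "s0 = (x0, n0)" by fastforce
  have n0: "1 \<le> n0" "n0 \<le> N" using s0 s0_def unfolding States_def by auto
  have "(x0, n0 + (N - n0)) \<in> reach E N s0"
    by (rule reach_stay_put) (use n0 s0 s0_def reach.start in auto)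
  then have start: "(x0, N) \<in> reach E N s0" "\<not> capture N (x0, N)"
    using n0 s0 s0_def by (auto simp: capture_def)
  have "x0 N \<in> V" "x0 1 \<in> V" using s0 s0_def N unfolding States_def by auto
  then have "E\<^sup>*\<^sup>* (x0 N) (x0 1)" using G unfolding simple_connected_graph_def by auto
  then obtain k where "(E ^^ k) (x0 N) (x0 1)" using rtranclp_imp_relpowp by metis
  then obtain x c where "(x, N) \<in> reach E N s0" "\<not> capture N (x, N)" "c \<in> {1..N-1}" "E (x N) (x c)"
    using reach_robber_adjacent_to_cop[OF _ start] N by force
  then show ?thesis using reach_robber_adjacent_to_one_of_two_cops[OF G assms(2) N] by blast
qed


section \<open>Nonpositional trigger strategies\<close>

lemma not_positional_trigger_if_capture:
  assumes "0 < \<gamma>" "\<gamma> < 1" and "simple_connected_graph V E" "s0 \<in> States V N"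
    and m: "m \<in> {1..N}" and s: "(x, N) \<in> reach E N s0" "\<not> capture N (x, N)"
    and captured: "capture N (move N (x, N) (\<Phi> m N (x, N)))"
  shows "\<not> positional_trigger V E N \<gamma> \<epsilon> s0 \<Phi>"
proof
  assume "positional_trigger V E N \<gamma> \<epsilon> s0 \<Phi>"
  moreover have "N \<in> {1..N}" using m by simp
  ultimately obtain \<phi> where opt: "optimal_pair V E N \<gamma> \<epsilon> N \<phi>"
    and "\<forall>s\<in>reach E N s0. snd s = N \<and> \<not> capture N s \<longrightarrow> \<Phi> m N s = \<phi> N s"
    using m unfolding positional_trigger_def CR_opt_def by blast
  then have "\<Phi> m N (x, N) = \<phi> N (x, N)" using s by auto
  moreover have "(x, N) \<in> States V N" using reach_in_States[OF s(1) assms(4,3)] .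
  ultimately show False
    using CR_optimal_robber_avoids_capture[OF assms(1,2) opt] s(2) captured by simp
qed

theorem mainTheorem5:
  fixes V :: "'v set" and E :: "'v \<Rightarrow> 'v \<Rightarrow> bool" and N :: nat and \<gamma> :: real
    and s0 :: "'v state"
  assumes "simple_connected_graph V E"
    and "card V \<ge> 3"
    and "N \<ge> 3"
    and "0 < \<gamma>" and "\<gamma> < 1"
    and "s0 \<in> States V N" and "\<not> capture N s0"
  shows "\<exists>\<Phi>. trigger_choice V E N \<gamma> 0 \<Phi> \<and> \<not> positional_trigger V E N \<gamma> 0 s0 \<Phi>"
proof -
  interpret discounted_capture_game V E N \<gamma> using assms by unfold_locales auto
  define \<Phi> where "\<Phi> = (\<lambda>m (n::nat). greedy m (reward N m 0))"
  have "optimal_pair V E N \<gamma> 0 m (\<Phi> m)" for m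
    unfolding \<Phi>_def by (rule optimal_pair_greedy) (simp add: abs_reward_le_1)
  then have "trigger_choice V E N \<gamma> 0 \<Phi>" by (simp add: trigger_choice_def)
  moreover obtain x c m where "(x, N) \<in> reach E N s0" "\<not> capture N (x, N)" "c \<in> {1..N-1}"
      "m \<in> {1..N-1}" "E (x N) (x c)" "x m \<noteq> x c"
    using exists_reachable_sacrifice_state[OF assms(1-3,6,7)] by blast
  moreover from this have "capture N (move N (x, N) (\<Phi> m N (x, N)))"
    using greedy_sacrifice assms(3) unfolding \<Phi>_def by simp
  ultimately show ?thesis
    using not_positional_trigger_if_capture[OF assms(4,5,1,6)] by fastforce
qed

end
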